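(* Let $d$ and $\alpha$ be positive integers. There is a constant $C$ depending only on $d$ and $\alpha$ such that: if $P(x)$ is a monic polynomial of degree $d$ with real coefficients and $x_0<x_1<\cdots<x_d$ are integers with $|P(x_i)|\leqslant\alpha$ for every $i\in\{0,\dots,d\}$, then $|x_d-x_0|\leqslant C$. *)

theory Defs
  imports "HOL-Computational_Algebra.Polynomial"
begin

end

theory Submission
  imports Defs
begin

(* Lagrange interpolation at the d + 1 points x i writes the leading coefficient 1 of P as
   \<Sum>i. P(x i) / \<Prod>j\<noteq>i. (x i - x j). Each denominator is a product of nonzero integers, one of
   which is the distance from x i to the farther of x 0 and x d, at least (x d - x 0) / 2.
   Hence every summand is at most 2 \<alpha> / (x d - x 0), and so x d - x 0 \<le> 2 \<alpha> (d + 1). *)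

lemma lagrange_top_coeff:
  fixes S :: "'a::field set" and P :: "'a poly"
  assumes fin: "finite S" and deg: "degree P < card S"
  shows "coeff P (card S - 1) = (\<Sum>a\<in>S. poly P a / (\<Prod>b\<in>S-{a}. a - b))"
proof -
  define c where "c a = poly P a / (\<Prod>b\<in>S-{a}. a - b)" for a
  define q where "q a = (\<Prod>b\<in>S-{a}. [:-b, 1:])" for a
  define L where "L = (\<Sum>a\<in>S. smult (c a) (q a))"
  have degree_q: "degree (q a) = card S - 1" if "a \<in> S" for a
    unfolding q_def using fin that by (subst degree_prod_eq_sum_degree) auto
  have lead_coeff_q: "lead_coeff (q a) = 1" for a
    unfolding q_def lead_coeff_prod by simp
  have poly_q: "poly (q a) x = (\<Prod>b\<in>S-{a}. x - b)" for a x
    unfolding q_def by (simp add: poly_prod)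
  have "degree L \<le> card S - 1"
    unfolding L_def
    by (rule degree_sum_le) (use fin degree_q in \<open>auto intro: order.trans[OF degree_smult_le]\<close>)
  moreover have "poly L x = poly P x" if x: "x \<in> S" for x
  proof -
    have vanish: "poly (q a) x = 0" if "a \<in> S - {x}" for a
      unfolding poly_q using fin that x by (intro prod_zero) auto
    have "poly L x = (\<Sum>a\<in>S. c a * poly (q a) x)"
      unfolding L_def by (simp add: poly_sum)
    also have "\<dots> = c x * poly (q x) x"
      using fin x vanish by (subst sum.remove) auto
    also have "\<dots> = poly P x"
      unfolding c_def poly_q using fin by (simp add: prod_zero_iff)
    finally show ?thesis .
  qed
  ultimately have "P = L"
    using deg by (intro poly_eqI_degree[of S]) auto
  hence "coeff P (card S - 1) = (\<Sum>a\<in>S. c a * coeff (q a) (card S - 1))"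
    by (simp add: L_def coeff_sum)
  also have "\<dots> = (\<Sum>a\<in>S. c a)"
    by (intro sum.cong refl) (metis degree_q lead_coeff_q mult.right_neutral)
  finally show ?thesis unfolding c_def .
qed

lemma abs_diff_le_abs_prod_diffs_Ints:
  fixes S :: "'a::linordered_idom set"
  assumes "finite S" "S \<subseteq> \<int>" "a \<in> S" "b \<in> S" "b \<noteq> a"
  shows "\<bar>a - b\<bar> \<le> \<bar>\<Prod>c\<in>S-{a}. a - c\<bar>"
proof -
  have "\<bar>a - b\<bar> * 1 \<le> \<bar>a - b\<bar> * (\<Prod>c\<in>S-{a}-{b}. \<bar>a - c\<bar>)"
  proof (intro mult_left_mono prod_ge_1)
    fix c assume c: "c \<in> S - {a} - {b}"
    then have "a - c \<in> \<int>" "a - c \<noteq> 0"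
      using assms by (auto intro: Ints_diff)
    then show "1 \<le> \<bar>a - c\<bar>" by (rule Ints_nonzero_abs_ge1)
  qed auto
  also have "\<dots> = (\<Prod>c\<in>S-{a}. \<bar>a - c\<bar>)"
    using assms by (intro prod.remove[symmetric]) auto
  finally show ?thesis by (simp add: abs_prod)
qed

lemma monic_bounded_on_Ints_spread_le:
  fixes S :: "'a::linordered_field set" and P :: "'a poly"
  assumes fin: "finite S" and ints: "S \<subseteq> \<int>"
    and deg: "degree P + 1 = card S" and monic: "lead_coeff P = 1"
    and bounded: "\<forall>a\<in>S. \<bar>poly P a\<bar> \<le> \<alpha>"
    and lo: "lo \<in> S" and hi: "hi \<in> S"
  shows "\<bar>hi - lo\<bar> \<le> 2 * \<alpha> * of_nat (card S)"
proof (cases "lo = hi")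
  case True
  then show ?thesis using bounded lo by (auto intro: order.trans[OF abs_ge_zero])
next
  case False
  define L where "L = \<bar>hi - lo\<bar>"
  have L_pos: "L > 0" unfolding L_def using False by simp
  have summand_le: "\<bar>poly P a / (\<Prod>b\<in>S-{a}. a - b)\<bar> \<le> \<alpha> / (L / 2)" if a: "a \<in> S" for a
  proof -
    have "L \<le> \<bar>a - lo\<bar> + \<bar>a - hi\<bar>"
      using abs_triangle_ineq4[of "a - lo" "a - hi"] by (simp add: L_def)
    then have "L / 2 \<le> \<bar>a - lo\<bar> \<or> L / 2 \<le> \<bar>a - hi\<bar>"
      by linarith
    then obtain b where b: "b \<in> S" "L / 2 \<le> \<bar>a - b\<bar>"
      using lo hi by blast
    with L_pos have "b \<noteq> a" by auto
    with b have "L / 2 \<le> \<bar>\<Prod>c\<in>S-{a}. a - c\<bar>"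
      using abs_diff_le_abs_prod_diffs_Ints[OF fin ints a] by (meson order.trans)
    moreover have "\<bar>poly P a\<bar> \<le> \<alpha>" "0 \<le> \<alpha>"
      using bounded a by (auto intro: order.trans[OF abs_ge_zero])
    ultimately have "\<bar>poly P a\<bar> / \<bar>\<Prod>c\<in>S-{a}. a - c\<bar> \<le> \<alpha> / (L / 2)"
      using L_pos by (intro frac_le) auto
    then show ?thesis
      by (simp add: abs_div)
  qed
  have "1 = coeff P (card S - 1)"
    using monic by (simp flip: deg)
  also have "\<dots> = (\<Sum>a\<in>S. poly P a / (\<Prod>b\<in>S-{a}. a - b))"
    using deg by (intro lagrange_top_coeff[OF fin]) simp
  also have "\<dots> \<le> (\<Sum>a\<in>S. \<alpha> / (L / 2))"
    by (intro sum_mono order.trans[OF abs_ge_self summand_le])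
  also have "\<dots> = 2 * \<alpha> * of_nat (card S) / L"
    by simp
  finally show ?thesis
    using L_pos by (simp add: L_def field_simps)
qed

lemma strict_mono_on_atMost_if_Suc:
  fixes x :: "nat \<Rightarrow> 'a::order"
  assumes "\<forall>i<d. x i < x (Suc i)"
  shows "strict_mono_on {..d} x"
proof (rule strict_mono_onI)
  fix i j :: nat assume "i < j" "j \<in> {..d}"
  then show "x i < x j"
    by (induction i j rule: less_Suc_induct) (use assms in \<open>auto dest: order.strict_trans\<close>)
qed

theorem mainTheorem7:
  fixes d :: nat and \<alpha> :: nat
  assumes "d > 0" and "\<alpha> > 0"
  shows "\<exists>C::real. \<forall>(P::real poly) (x::nat \<Rightarrow> int).
           degree P = d \<longrightarrow> lead_coeff P = 1 \<longrightarrow>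
           (\<forall>i<d. x i < x (Suc i)) \<longrightarrow>
           (\<forall>i\<le>d. \<bar>poly P (real_of_int (x i))\<bar> \<le> real \<alpha>) \<longrightarrow>
           \<bar>real_of_int (x d - x 0)\<bar> \<le> C"
proof (intro exI[of _ "2 * real \<alpha> * (real d + 1)"] allI impI)
  fix P :: "real poly" and x :: "nat \<Rightarrow> int"
  assume deg: "degree P = d" and monic: "lead_coeff P = 1"
    and increasing: "\<forall>i<d. x i < x (Suc i)"
    and bounded: "\<forall>i\<le>d. \<bar>poly P (real_of_int (x i))\<bar> \<le> real \<alpha>"
  define S where "S = real_of_int ` x ` {..d}"
  have "strict_mono_on {..d} (\<lambda>i. real_of_int (x i))"
    using strict_mono_on_atMost_if_Suc[OF increasing] by (simp add: strict_mono_on_def)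
  then have card_S: "card S = d + 1"
    unfolding S_def image_image by (simp add: card_image strict_mono_on_imp_inj_on)
  have "\<bar>real_of_int (x d) - real_of_int (x 0)\<bar> \<le> 2 * real \<alpha> * of_nat (card S)"
  proof (rule monic_bounded_on_Ints_spread_le[OF _ _ _ monic])
    show "finite S" "S \<subseteq> \<int>" "degree P + 1 = card S"
      using card_S deg by (auto simp: S_def)
    show "\<forall>a\<in>S. \<bar>poly P a\<bar> \<le> real \<alpha>" "real_of_int (x 0) \<in> S" "real_of_int (x d) \<in> S"
      using bounded by (auto simp: S_def)
  qed
  then show "\<bar>real_of_int (x d - x 0)\<bar> \<le> 2 * real \<alpha> * (real d + 1)"
    by (simp add: card_S add.commute)
qed

end
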